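(* Let $\sigma^2>0$, $0<\dot R<\frac{1}{2\sigma^2}$ and $0<\epsilon<1$. For each integer $\mathsf{M}\ge 2$, set $\xi=\sqrt{\log\mathsf{M}/\dot R}$ and $\Upsilon=\xi-\sigma Q^{-1}(\epsilon)$. Consider the pulse-position modulation scheme of block length $n=\mathsf{M}$ in which message $m\in\{1,\dots,\mathsf{M}\}$ is mapped to $x_k(m)=\xi$ if $k=m$ and $x_k(m)=0$ otherwise (so the energy is $\mathsf{E}=\xi^2=\log\mathsf{M}/\dot R$); the one-bit quantizer with region $\{\tilde y\ge\Upsilon\}$ is used, i.e. $Y_k=1$ if $x_k+Z_k\ge\Upsilon$ and $Y_k=-1$ otherwise, with $Z_k$ i.i.d. $\mathcal{N}(0,\sigma^2)$; and the decoder outputs $\hat M=m$ if $Y_m=1$ and $Y_k=-1$ for all $k\neq m$, and declares an error otherwise. Then the error probability satisfies $$\Pr(\hat M\neq M)\le (\mathsf{M}-1)\,Q\!\left(\frac{\xi-\sigma Q^{-1}(\epsilon)}{\sigma}\right)+\epsilon,$$ and $\limsup_{\mathsf{M}\to\infty}\Pr(\hat M\neq M)\le\epsilon$. Consequently every rate per unit-energy $\dot R<\frac{1}{2\sigma^2}$ is achievable by such PPM schemes with threshold quantizers.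
   Context: $Q(x)=\frac{1}{\sqrt{2\pi}}\int_x^\infty e^{-t^2/2}\,dt$ and $Q^{-1}$ is its inverse; $\log$ is natural. The message $M$ is uniform on $\{1,\dots,\mathsf{M}\}$. A rate per unit-energy $\dot R$ is achievable if for every $\epsilon'>0$ there exist an encoder with $\sum_k x_k^2\le\mathsf{E}$ for every message, a quantization region and a decoder with $\log\mathsf{M}/\mathsf{E}>\dot R-\epsilon'$ and $\Pr(\hat M\neq M)\to0$ as $\mathsf{E}\to\infty$. *)

theory Defs
  imports "HOL-Probability.Probability"
begin

text \<open>Gaussian tail function Q and its inverse (Q is a strictly decreasing bijection
  from the reals onto (0,1)).\<close>
definition Qfun :: "real \<Rightarrow> real" where
  "Qfun x = (1 / sqrt (2 * pi)) * (LBINT t:{x..}. exp (- (t^2) / 2))"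

definition Qinv :: "real \<Rightarrow> real" where
  "Qinv e = (THE x. Qfun x = e)"

text \<open>i.i.d. N(0, sigma^2) noise on the M channel uses k = 1..M
  (normal_density mu s uses s as the standard deviation).\<close>
definition noise :: "real \<Rightarrow> nat \<Rightarrow> (nat \<Rightarrow> real) measure" where
  "noise \<sigma> M = PiM {1..M} (\<lambda>_. density lborel (normal_density 0 \<sigma>))"

definition ppm_cw :: "real \<Rightarrow> nat \<Rightarrow> nat \<Rightarrow> real" where
  "ppm_cw \<xi> m k = (if k = m then \<xi> else 0)"

definition quant :: "real \<Rightarrow> (nat \<Rightarrow> real) \<Rightarrow> (nat \<Rightarrow> real) \<Rightarrow> nat \<Rightarrow> int" where
  "quant \<Upsilon> x z k = (if x k + z k \<ge> \<Upsilon> then 1 else -1)"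

definition ppm_dec :: "nat \<Rightarrow> (nat \<Rightarrow> int) \<Rightarrow> nat option" where
  "ppm_dec M y =
     (if \<exists>m\<in>{1..M}. y m = 1 \<and> (\<forall>k\<in>{1..M}. k \<noteq> m \<longrightarrow> y k = -1)
      then Some (SOME m. m \<in> {1..M} \<and> y m = 1 \<and> (\<forall>k\<in>{1..M}. k \<noteq> m \<longrightarrow> y k = -1))
      else None)"

text \<open>Error probability Pr(hat M <> M) for M uniform on {1..M}, PPM amplitude xi,
  threshold Upsilon, noise std sigma (law of total probability over the uniform message).\<close>
definition ppm_err :: "real \<Rightarrow> nat \<Rightarrow> real \<Rightarrow> real \<Rightarrow> real" where
  "ppm_err \<sigma> M \<xi> \<Upsilon> =
     (1 / real M) * (\<Sum>m\<in>{1..M}.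
        measure (noise \<sigma> M)
          {z \<in> space (noise \<sigma> M). ppm_dec M (quant \<Upsilon> (ppm_cw \<xi> m) z) \<noteq> Some m})"

definition ppm_xi :: "real \<Rightarrow> nat \<Rightarrow> real" where
  "ppm_xi R M = sqrt (ln (real M) / R)"

text \<open>Achievability of rate per unit energy R by PPM schemes with threshold quantizers:
  for every eps' > 0 there is a family (indexed by M) of PPM schemes with amplitudes xi_M
  (energy E_M = xi_M^2, so every codeword meets the energy constraint with equality) and
  thresholds Upsilon_M such that log M / E_M > R - eps', E_M \<rightarrow> \<infinity>, and the error
  probability tends to 0.\<close>
definition ppm_achievable :: "real \<Rightarrow> real \<Rightarrow> bool" where
  "ppm_achievable \<sigma> R \<longleftrightarrow>
     (\<forall>\<epsilon>'>0. \<exists>\<xi>s \<Upsilon>s. (\<forall>M\<ge>2. \<xi>s M > 0 \<and> ln (real M) / (\<xi>s M)^2 > R - \<epsilon>')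
        \<and> filterlim (\<lambda>M. (\<xi>s M)^2) at_top sequentially
        \<and> (\<lambda>M. ppm_err \<sigma> M (\<xi>s M) (\<Upsilon>s M)) \<longlonglongrightarrow> 0)"

end

theory Submission
  imports Defs
begin

(* 1. The Gaussian tail Q(x) is the upper tail probability P(X >= x) of a standard normal
      X.  From this we get that Q is continuous, strictly decreasing from 1 to 0 (so Qinv
      really inverts Q on (0,1)), and the tail bound Q(x) <= exp(-x^2/2) for x >= 0.
   2. Union bound: if message m is sent, a decoding error requires either the noise in
      slot m to push the channel output below the threshold, or the noise in some other
      slot to reach it.  Hence for every M >= 1, amplitude xi and threshold Upsilon
        ppm_err <= (M - 1) Q(Upsilon/sigma) + Q((xi - Upsilon)/sigma).
   3. Asymptotics: with xi^2 = ln M / R and theta^2 > 2 sigma^2 R, the tail bound gives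
      (M - 1) Q(theta xi/sigma) <= M^(-k) for some k > 0, which tends to 0.
   The three parts of the theorem follow: the threshold xi - sigma Qinv(eps) makes the
   second union term equal eps; the first one vanishes since xi - sigma Qinv(eps) >= theta xi
   eventually; and the threshold theta xi makes both union terms vanish. *)

section \<open>The Gaussian tail function\<close>

abbreviation std_normal :: "real measure" where
  "std_normal \<equiv> density lborel (normal_density 0 1)"

interpretation std_normal: real_distribution std_normal
  by (simp add: real_distribution_def real_distribution_axioms_def prob_space_normal_density)

lemma std_normal_singleton: "measure std_normal {x} = 0"
proof -
  have "emeasure std_normal {x} = (\<integral>\<^sup>+ t. ennreal (normal_density 0 1 t) * indicator {x} t \<partial>lborel)"
    by (rule emeasure_density) auto
  also have "\<dots> = (\<integral>\<^sup>+ t. (0::ennreal) \<partial>(lborel::real measure))"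
    by (rule nn_integral_cong_AE) (use AE_lborel_singleton[of x] in \<open>auto elim!: eventually_mono\<close>)
  finally show ?thesis by (simp add: measure_def)
qed

lemma Qfun_measure: "Qfun x = measure std_normal {x..}"
proof -
  have "measure std_normal {x..} = integral\<^sup>L std_normal (indicator {x..})"
    by simp
  also have "\<dots> = integral\<^sup>L lborel (\<lambda>t. normal_density 0 1 t *\<^sub>R indicator {x..} t)"
    by (rule integral_density) auto
  also have "\<dots> = integral\<^sup>L lborel (\<lambda>t. (1 / sqrt (2 * pi)) * (indicator {x..} t *\<^sub>R exp (- (t^2) / 2)))"
    by (rule Bochner_Integration.integral_cong) (auto simp: std_normal_density_def)
  also have "\<dots> = Qfun x"
    unfolding Qfun_def set_lebesgue_integral_def by (rule integral_mult_right_zero)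
  finally show ?thesis by simp
qed

text \<open>Equivalently Q = 1 - F for the standard normal distribution function F; this gives
  access to the general facts about distribution functions.\<close>
lemma Qfun_cdf: "Qfun x = 1 - cdf std_normal x"
proof -
  have "measure std_normal {x..} = measure std_normal {x} + measure std_normal {x<..}"
    using std_normal.finite_measure_Union[of "{x}" "{x<..}"] by (auto simp: ivl_disj_un_singleton(1)[symmetric])
  also have "{x<..} = UNIV - {..x}" by auto
  finally show ?thesis
    using std_normal.prob_compl[of "{..x}"] by (simp add: Qfun_measure cdf_def std_normal_singleton)
qed

lemma Qfun_nonneg: "0 \<le> Qfun x"
  by (simp add: Qfun_measure)

lemma Qfun_antimono: "x \<le> y \<Longrightarrow> Qfun y \<le> Qfun x"
  unfolding Qfun_cdf using std_normal.cdf_nondecreasing[of x y] by simp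

lemma isCont_Qfun: "isCont Qfun x"
  unfolding Qfun_cdf[abs_def] using std_normal.isCont_cdf std_normal_singleton
  by (intro continuous_intros) simp

lemma Qfun_at_top: "(Qfun \<longlongrightarrow> 0) at_top"
  using tendsto_diff[OF tendsto_const[of 1] std_normal.cdf_lim_at_top_prob]
  unfolding Qfun_cdf[abs_def] by simp

lemma Qfun_at_bot: "(Qfun \<longlongrightarrow> 1) at_bot"
  using tendsto_diff[OF tendsto_const[of 1] std_normal.cdf_lim_at_bot]
  unfolding Qfun_cdf[abs_def] by simp

text \<open>Q is strictly decreasing: the normal density is bounded below on every interval
  (x, y] by a positive constant, so that interval carries positive mass.\<close>
lemma Qfun_strict_antimono:
  assumes "x < y" shows "Qfun y < Qfun x"
proof -
  define c where "c = (1 / sqrt (2 * pi)) * exp (- (x^2 + y^2) / 2)"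
  have c_pos: "c > 0" unfolding c_def by simp
  have density_lower: "c \<le> normal_density 0 1 t" if "t \<in> {x<..y}" for t
  proof -
    have "t^2 \<le> x^2 + y^2"
      using that by (cases "t \<ge> 0") (auto intro!: power_mono simp: abs_le_square_iff[symmetric] add_increasing add_increasing2)
    then show ?thesis unfolding c_def std_normal_density_def by (auto simp: divide_simps)
  qed
  have "ennreal (c * (y - x)) = (\<integral>\<^sup>+ t. ennreal c * indicator {x<..y} t \<partial>lborel)"
    using assms c_pos by (simp add: nn_integral_cmult_indicator ennreal_mult)
  also have "\<dots> \<le> (\<integral>\<^sup>+ t. ennreal (normal_density 0 1 t) * indicator {x<..y} t \<partial>lborel)"
    by (intro nn_integral_mono) (auto simp: indicator_def ennreal_leI density_lower)
  also have "\<dots> = ennreal (measure std_normal {x<..y})"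
    by (simp add: emeasure_density[symmetric] std_normal.emeasure_eq_measure)
  finally have "c * (y - x) \<le> measure std_normal {x<..y}"
    by (subst (asm) ennreal_le_iff) auto
  moreover have "c * (y - x) > 0" using c_pos assms by simp
  ultimately show ?thesis
    using std_normal.cdf_diff_eq[OF assms] unfolding Qfun_cdf by simp
qed

text \<open>Since Q is a continuous strictly decreasing bijection onto (0,1), Qinv inverts it.\<close>
lemma Qfun_Qinv:
  assumes "0 < e" "e < 1" shows "Qfun (Qinv e) = e"
proof -
  obtain a where a: "Qfun a > e"
    using order_tendstoD(1)[OF Qfun_at_bot, of e] assms by (auto simp: eventually_at_bot_linorder)
  obtain b where b: "Qfun b < e"
    using order_tendstoD(2)[OF Qfun_at_top, of e] assms by (auto simp: eventually_at_top_linorder)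
  have "a \<le> b" using a b Qfun_antimono[of b a] by (cases "a \<le> b") auto
  then obtain x where x: "Qfun x = e"
    using IVT2[of Qfun b e a] a b isCont_Qfun by auto
  have "(THE x. Qfun x = e) = x"
    using x Qfun_strict_antimono by (intro the_equality) (metis linorder_neqE_linordered_idom less_irrefl)+
  then show ?thesis unfolding Qinv_def using x by simp
qed

text \<open>Gaussian tail bound Q(x) \<le> exp(-x^2/2) for x \<ge> 0: shifting the tail integral by x and
  using (x + s)^2 \<ge> x^2 + s^2 for s \<ge> 0.\<close>
lemma Qfun_tail_bound:
  assumes x: "0 \<le> x" shows "Qfun x \<le> exp (- (x^2) / 2)"
proof -
  have shifted: "normal_density 0 1 (x + s) \<le> exp (- (x^2) / 2) * normal_density 0 1 s"
    if "0 \<le> s" for s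
  proof -
    have "(x + s)^2 \<ge> x^2 + s^2" using that x by (simp add: power2_eq_square algebra_simps)
    then have "exp (- ((x + s)^2) / 2) \<le> exp (- (x^2) / 2) * exp (- (s^2) / 2)"
      by (simp add: exp_add[symmetric])
    then show ?thesis unfolding std_normal_density_def by (simp add: divide_simps)
  qed
  have "emeasure std_normal {x..} = (\<integral>\<^sup>+ t. ennreal (normal_density 0 1 t) * indicator {x..} t \<partial>lborel)"
    by (rule emeasure_density) auto
  also have "\<dots> = (\<integral>\<^sup>+ s. ennreal (normal_density 0 1 (x + s)) * indicator {x..} (x + s) \<partial>lborel)"
    using nn_integral_real_affine[of "\<lambda>t. ennreal (normal_density 0 1 t) * indicator {x..} t" 1 x] by simp
  also have "\<dots> \<le> (\<integral>\<^sup>+ s. ennreal (exp (- (x^2) / 2)) * ennreal (normal_density 0 1 s) \<partial>lborel)"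
    using shifted by (intro nn_integral_mono) (auto simp: indicator_def ennreal_mult[symmetric] intro!: ennreal_leI)
  also have "\<dots> = ennreal (exp (- (x^2) / 2)) * emeasure std_normal UNIV"
    by (simp add: nn_integral_cmult emeasure_density)
  also have "emeasure std_normal UNIV = 1"
    using std_normal.emeasure_space_1 by simp
  finally have "ennreal (measure std_normal {x..}) \<le> ennreal (exp (- (x^2) / 2))"
    by (simp add: std_normal.emeasure_eq_measure)
  then show ?thesis by (simp add: Qfun_measure)
qed

section \<open>Gaussian noise with standard deviation \<sigma>\<close>

lemma normal_density_scale:
  fixes c :: real
  assumes c: "c \<noteq> 0" and A[measurable]: "A \<in> sets borel"
  shows "emeasure (density lborel (normal_density 0 \<bar>c\<bar>)) A = emeasure std_normal {x. c * x \<in> A}"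
proof -
  have scaled_density: "\<bar>c\<bar> * normal_density 0 \<bar>c\<bar> (c * x) = normal_density 0 1 x" for x
    using c by (simp add: normal_density_def real_sqrt_mult power_mult_distrib field_simps)
  have "emeasure (density lborel (normal_density 0 \<bar>c\<bar>)) A
      = (\<integral>\<^sup>+ x. ennreal (normal_density 0 \<bar>c\<bar> x) * indicator A x \<partial>lborel)"
    by (rule emeasure_density) auto
  also have "\<dots> = \<bar>c\<bar> * (\<integral>\<^sup>+ x. ennreal (normal_density 0 \<bar>c\<bar> (0 + c * x)) * indicator A (0 + c * x) \<partial>lborel)"
    by (rule nn_integral_real_affine) (auto simp: c)
  also have "\<dots> = (\<integral>\<^sup>+ x. ennreal \<bar>c\<bar> * (ennreal (normal_density 0 \<bar>c\<bar> (c * x)) * indicator A (c * x)) \<partial>lborel)"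
    by (subst nn_integral_cmult) auto
  also have "\<dots> = (\<integral>\<^sup>+ x. ennreal (normal_density 0 1 x) * indicator {x. c * x \<in> A} x \<partial>lborel)"
    by (intro nn_integral_cong)
       (auto simp: indicator_def ennreal_mult'[symmetric] mult.assoc[symmetric] scaled_density)
  also have "\<dots> = emeasure std_normal {x. c * x \<in> A}"
    by (rule emeasure_density[symmetric]) measurable
  finally show ?thesis .
qed

lemma normal_measure_atLeast:
  assumes "\<sigma> > 0"
  shows "measure (density lborel (normal_density 0 \<sigma>)) {a..} = Qfun (a / \<sigma>)"
proof -
  have "emeasure (density lborel (normal_density 0 \<bar>\<sigma>\<bar>)) {a..} = emeasure std_normal {x. \<sigma> * x \<in> {a..}}"
    by (rule normal_density_scale) (use assms in auto)
  also have "{x. \<sigma> * x \<in> {a..}} = {a / \<sigma>..}"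
    using assms by (auto simp: field_simps)
  finally show ?thesis using assms by (simp add: measure_def Qfun_measure)
qed

text \<open>By symmetry of the normal density, lower tails are also values of Q.\<close>
lemma normal_measure_atMost:
  assumes "\<sigma> > 0"
  shows "measure (density lborel (normal_density 0 \<sigma>)) {..a} = Qfun (- a / \<sigma>)"
proof -
  have "emeasure (density lborel (normal_density 0 \<bar>-\<sigma>\<bar>)) {..a} = emeasure std_normal {x. (-\<sigma>) * x \<in> {..a}}"
    by (rule normal_density_scale) (use assms in auto)
  also have "{x. (-\<sigma>) * x \<in> {..a}} = {- a / \<sigma>..}"
    using assms by (auto simp: field_simps)
  finally show ?thesis using assms by (simp add: measure_def Qfun_measure)
qed

lemma noise_coordinate:
  assumes "\<sigma> > 0" "k \<in> {1..M}" "A \<in> sets borel"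
  shows "{z \<in> space (noise \<sigma> M). z k \<in> A} \<in> sets (noise \<sigma> M)"
    and "measure (noise \<sigma> M) {z \<in> space (noise \<sigma> M). z k \<in> A}
           = measure (density lborel (normal_density 0 \<sigma>)) A"
proof -
  interpret normal: prob_space "density lborel (normal_density 0 \<sigma>)"
    by (rule prob_space_normal_density) fact
  interpret product_prob_space "\<lambda>_. density lborel (normal_density 0 \<sigma>)" "{1..M}"
    by unfold_locales
  show "{z \<in> space (noise \<sigma> M). z k \<in> A} \<in> sets (noise \<sigma> M)"
    unfolding noise_def using assms by (intro sets_Collect_single') auto
  show "measure (noise \<sigma> M) {z \<in> space (noise \<sigma> M). z k \<in> A}
           = measure (density lborel (normal_density 0 \<sigma>)) A"
    using emeasure_PiM_Collect_single[of k A] assms unfolding noise_def measure_def by simp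
qed

section \<open>Union bound for the error probability\<close>

lemma ppm_dec_correct:
  assumes m: "m \<in> {1..M}" "y m = 1" and others: "\<forall>k\<in>{1..M}. k \<noteq> m \<longrightarrow> y k = -1"
  shows "ppm_dec M y = Some m"
proof -
  let ?unique_one = "\<lambda>m. m \<in> {1..M} \<and> y m = 1 \<and> (\<forall>k\<in>{1..M}. k \<noteq> m \<longrightarrow> y k = -1)"
  have unique: "m' = m" if "?unique_one m'" for m'
  proof (rule ccontr)
    assume "m' \<noteq> m"
    then have "m \<noteq> m'" by simp
    then have "y m = -1" using that m(1) by blast
    with m(2) show False by simp
  qed
  have "?unique_one m" using m others by blast
  then have "(SOME m. ?unique_one m) = m"
    using unique by (rule some_equality)
  moreover have "\<exists>m\<in>{1..M}. y m = 1 \<and> (\<forall>k\<in>{1..M}. k \<noteq> m \<longrightarrow> y k = -1)"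
    using \<open>?unique_one m\<close> by blast
  ultimately show ?thesis unfolding ppm_dec_def by (simp only: if_True)
qed

lemma ppm_error_event:
  assumes "m \<in> {1..M}" "ppm_dec M (quant \<Upsilon> (ppm_cw \<xi> m) z) \<noteq> Some m"
  shows "z m \<le> \<Upsilon> - \<xi> \<or> (\<exists>k\<in>{1..M} - {m}. z k \<ge> \<Upsilon>)"
proof (rule ccontr)
  assume "\<not> ?thesis"
  then have "ppm_dec M (quant \<Upsilon> (ppm_cw \<xi> m) z) = Some m"
    using assms(1) by (intro ppm_dec_correct) (auto simp: quant_def ppm_cw_def)
  with assms(2) show False by simp
qed

lemma ppm_error_given_message:
  assumes \<sigma>: "\<sigma> > 0" and m: "m \<in> {1..M}"
  shows "measure (noise \<sigma> M) {z \<in> space (noise \<sigma> M). ppm_dec M (quant \<Upsilon> (ppm_cw \<xi> m) z) \<noteq> Some m}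
    \<le> (real M - 1) * Qfun (\<Upsilon> / \<sigma>) + Qfun ((\<xi> - \<Upsilon>) / \<sigma>)"
proof -
  let ?P = "noise \<sigma> M"
  define F where "F = {z \<in> space ?P. z m \<in> {..\<Upsilon> - \<xi>}}"
  define G where "G k = {z \<in> space ?P. z k \<in> {\<Upsilon>..}}" for k
  interpret prob_space ?P
    unfolding noise_def by (intro prob_space_PiM prob_space_normal_density \<sigma>)
  have F_sets: "F \<in> sets ?P" unfolding F_def using \<sigma> m by (intro noise_coordinate) auto
  have G_sets: "G k \<in> sets ?P" if "k \<in> {1..M} - {m}" for k
    unfolding G_def using \<sigma> that by (intro noise_coordinate) auto
  have G_union_sets: "(\<Union>k\<in>{1..M} - {m}. G k) \<in> sets ?P"
    using G_sets by (intro sets.finite_UN) auto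
  have error_subset: "{z \<in> space ?P. ppm_dec M (quant \<Upsilon> (ppm_cw \<xi> m) z) \<noteq> Some m}
      \<subseteq> F \<union> (\<Union>k\<in>{1..M} - {m}. G k)"
    using ppm_error_event[OF m] unfolding F_def G_def by blast
  have "measure ?P {z \<in> space ?P. ppm_dec M (quant \<Upsilon> (ppm_cw \<xi> m) z) \<noteq> Some m}
      \<le> measure ?P (F \<union> (\<Union>k\<in>{1..M} - {m}. G k))"
    using F_sets G_union_sets by (intro finite_measure_mono[OF error_subset]) auto
  also have "\<dots> \<le> measure ?P F + measure ?P (\<Union>k\<in>{1..M} - {m}. G k)"
    using F_sets G_union_sets by (intro measure_subadditive) auto
  also have "measure ?P (\<Union>k\<in>{1..M} - {m}. G k) \<le> (\<Sum>k\<in>{1..M} - {m}. measure ?P (G k))"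
    using G_sets by (intro measure_subadditive_finite) (auto simp: emeasure_finite simp del: Diff_iff)
  also have "measure ?P F = Qfun ((\<xi> - \<Upsilon>) / \<sigma>)"
    using \<sigma> m normal_measure_atMost[OF \<sigma>, of "\<Upsilon> - \<xi>"] unfolding F_def
    by (subst noise_coordinate) auto
  also have "(\<Sum>k\<in>{1..M} - {m}. measure ?P (G k)) = (\<Sum>k\<in>{1..M} - {m}. Qfun (\<Upsilon> / \<sigma>))"
    using \<sigma> normal_measure_atLeast[OF \<sigma>] unfolding G_def
    by (intro sum.cong refl) (subst noise_coordinate; auto)
  also have "\<dots> = (real M - 1) * Qfun (\<Upsilon> / \<sigma>)"
    using m by (simp add: card_Diff_singleton of_nat_diff)
  finally show ?thesis by simp
qed

lemma ppm_err_union_bound: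
  assumes "\<sigma> > 0" "M \<ge> 1"
  shows "ppm_err \<sigma> M \<xi> \<Upsilon> \<le> (real M - 1) * Qfun (\<Upsilon> / \<sigma>) + Qfun ((\<xi> - \<Upsilon>) / \<sigma>)"
proof -
  let ?B = "(real M - 1) * Qfun (\<Upsilon> / \<sigma>) + Qfun ((\<xi> - \<Upsilon>) / \<sigma>)"
  have "ppm_err \<sigma> M \<xi> \<Upsilon> \<le> (1 / real M) * (\<Sum>m\<in>{1..M}. ?B)"
    unfolding ppm_err_def using assms
    by (intro mult_left_mono sum_mono ppm_error_given_message) auto
  also have "\<dots> = ?B" using assms by simp
  finally show ?thesis .
qed

lemma ppm_err_nonneg: "0 \<le> ppm_err \<sigma> M \<xi> \<Upsilon>"
  unfolding ppm_err_def by (intro mult_nonneg_nonneg sum_nonneg) auto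

section \<open>Asymptotics of the union bound\<close>

lemma ppm_xi_pos_sq:
  assumes "0 < R" "M \<ge> 2"
  shows "ppm_xi R M > 0" and "(ppm_xi R M)^2 = ln (real M) / R"
  using assms by (auto simp: ppm_xi_def)

lemma ppm_xi_at_top:
  assumes "0 < R" shows "filterlim (ppm_xi R) at_top sequentially"
proof -
  have "filterlim (\<lambda>M. (1 / R) * ln (real M)) at_top sequentially"
    using assms by (intro filterlim_tendsto_pos_mult_at_top[OF tendsto_const]
        filterlim_compose[OF ln_at_top filterlim_real_sequentially]) auto
  then show ?thesis
    unfolding ppm_xi_def[abs_def] by (auto intro: filterlim_compose[OF sqrt_at_top])
qed

text \<open>A rate below 1/(2\<sigma>^2) leaves room for a threshold fraction \<theta> < 1 of the amplitude.\<close>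
lemma rate_margin:
  fixes \<sigma> R :: real
  assumes "\<sigma> > 0" "0 < R" "R < 1 / (2 * \<sigma>^2)"
  obtains \<theta> where "0 < \<theta>" "\<theta> < 1" "R < \<theta>^2 / (2 * \<sigma>^2)"
proof -
  define r where "r = sqrt (2 * \<sigma>^2 * R)"
  have r_pos: "0 < r" using assms unfolding r_def by simp
  have "r^2 < 1" using assms by (simp add: r_def field_simps)
  then have r_less_1: "r < 1" using r_pos by (simp add: power_less_one_iff)
  have "r^2 < ((1 + r) / 2)^2" using r_pos r_less_1 by (intro power_strict_mono) auto
  moreover have "r^2 = 2 * \<sigma>^2 * R" unfolding r_def using assms by simp
  ultimately have "R < ((1 + r) / 2)^2 / (2 * \<sigma>^2)" using assms by (simp add: field_simps)
  with r_pos r_less_1 show ?thesis by (intro that[of "(1 + r) / 2"]) auto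
qed

text \<open>The key estimate: with \<xi>^2 = ln M / R and \<theta>^2 > 2\<sigma>^2 R, the M - 1 false-alarm
  probabilities together vanish, because (M - 1) Q(\<theta>\<xi>/\<sigma>) \<le> M exp(-\<theta>^2\<xi>^2/(2\<sigma>^2)) = M^(-k)
  for k = \<theta>^2/(2\<sigma>^2R) - 1 > 0.\<close>
lemma false_alarms_vanish:
  assumes \<sigma>: "\<sigma> > 0" and R: "0 < R" and \<theta>: "0 < \<theta>" "R < \<theta>^2 / (2 * \<sigma>^2)"
  shows "(\<lambda>M. (real M - 1) * Qfun (\<theta> * ppm_xi R M / \<sigma>)) \<longlonglongrightarrow> 0"
proof -
  define k where "k = \<theta>^2 / (2 * \<sigma>^2 * R) - 1"
  have k_pos: "k > 0" using \<theta> \<sigma> R unfolding k_def by (simp add: field_simps)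
  have bound: "(real M - 1) * Qfun (\<theta> * ppm_xi R M / \<sigma>) \<le> real M powr (- k)" if M: "M \<ge> 2" for M
  proof -
    define x where "x = ppm_xi R M"
    have x_pos: "x > 0" and x_sq: "x^2 = ln (real M) / R"
      using ppm_xi_pos_sq[OF R M] by (auto simp: x_def)
    have exponent: "- ((\<theta> * x / \<sigma>)^2) / 2 = - ((k + 1) * ln (real M))"
      using x_sq \<sigma> R unfolding k_def by (simp add: power_mult_distrib power_divide field_simps)
    have "(real M - 1) * Qfun (\<theta> * x / \<sigma>) \<le> real M * exp (- ((\<theta> * x / \<sigma>)^2) / 2)"
      using M x_pos \<theta> \<sigma> by (intro mult_mono Qfun_tail_bound) (auto simp: Qfun_nonneg)
    also have "\<dots> = real M * exp (- ((k + 1) * ln (real M)))"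
      by (simp only: exponent)
    also have "\<dots> = exp (ln (real M)) * exp (- ((k + 1) * ln (real M)))"
      using M by simp
    also have "\<dots> = exp (- k * ln (real M))"
      by (simp add: exp_add[symmetric] algebra_simps)
    also have "\<dots> = real M powr (- k)"
      using M by (simp add: powr_def)
    finally show ?thesis by (simp add: x_def)
  qed
  have "eventually (\<lambda>M. norm ((real M - 1) * Qfun (\<theta> * ppm_xi R M / \<sigma>)) \<le> real M powr (- k)) sequentially"
    using eventually_ge_at_top[of 2] by eventually_elim (use bound Qfun_nonneg in auto)
  moreover have "(\<lambda>M. real M powr (- k)) \<longlonglongrightarrow> 0"
    using k_pos by (intro tendsto_neg_powr filterlim_real_sequentially) auto
  ultimately show ?thesis by (rule Lim_null_comparison)
qed

lemma missed_detection_vanishes: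
  assumes "\<sigma> > 0" "0 < R" "0 < c"
  shows "(\<lambda>M. Qfun (c * ppm_xi R M / \<sigma>)) \<longlonglongrightarrow> 0"
proof -
  have "filterlim (\<lambda>M. (c / \<sigma>) * ppm_xi R M) at_top sequentially"
    using assms by (intro filterlim_tendsto_pos_mult_at_top[OF tendsto_const] ppm_xi_at_top) auto
  from filterlim_compose[OF Qfun_at_top this] show ?thesis by simp
qed

section \<open>Error bounds and achievability\<close>

lemma ppm_err_shifted_threshold:
  assumes "\<sigma> > 0" "M \<ge> 1"
  shows "ppm_err \<sigma> M \<xi> (\<xi> - \<sigma> * q) \<le> (real M - 1) * Qfun ((\<xi> - \<sigma> * q) / \<sigma>) + Qfun q"
  using ppm_err_union_bound[OF assms, of \<xi> "\<xi> - \<sigma> * q"] assms(1) by simp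

text \<open>For a fixed offset q, the false alarms vanish since \<xi> - \<sigma>q \<ge> \<theta>\<xi> eventually, so only
  the constant missed-detection probability Q(q) survives in the limit.\<close>
lemma ppm_err_limsup:
  assumes \<sigma>: "\<sigma> > 0" and R: "0 < R" "R < 1 / (2 * \<sigma>^2)"
  shows "limsup (\<lambda>M. ereal (ppm_err \<sigma> M (ppm_xi R M) (ppm_xi R M - \<sigma> * q))) \<le> ereal (Qfun q)"
proof -
  obtain \<theta> where \<theta>: "0 < \<theta>" "\<theta> < 1" "R < \<theta>^2 / (2 * \<sigma>^2)"
    using rate_margin[OF \<sigma> R] .
  let ?bound = "\<lambda>M. (real M - 1) * Qfun (\<theta> * ppm_xi R M / \<sigma>) + Qfun q"
  have "filterlim (\<lambda>M. (1 - \<theta>) * ppm_xi R M) at_top sequentially"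
    using \<theta> R by (intro filterlim_tendsto_pos_mult_at_top[OF tendsto_const] ppm_xi_at_top) auto
  then have margin: "eventually (\<lambda>M. \<sigma> * q \<le> (1 - \<theta>) * ppm_xi R M) sequentially"
    by (simp add: filterlim_at_top)
  have "eventually (\<lambda>M. ereal (ppm_err \<sigma> M (ppm_xi R M) (ppm_xi R M - \<sigma> * q)) \<le> ereal (?bound M)) sequentially"
    using margin eventually_ge_at_top[of 2]
  proof eventually_elim
    case (elim M)
    have "Qfun ((ppm_xi R M - \<sigma> * q) / \<sigma>) \<le> Qfun (\<theta> * ppm_xi R M / \<sigma>)"
      using elim \<sigma> by (intro Qfun_antimono divide_right_mono) (auto simp: algebra_simps)
    then have "(real M - 1) * Qfun ((ppm_xi R M - \<sigma> * q) / \<sigma>) \<le> (real M - 1) * Qfun (\<theta> * ppm_xi R M / \<sigma>)"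
      using elim by (intro mult_left_mono) auto
    moreover have "ppm_err \<sigma> M (ppm_xi R M) (ppm_xi R M - \<sigma> * q)
        \<le> (real M - 1) * Qfun ((ppm_xi R M - \<sigma> * q) / \<sigma>) + Qfun q"
      using elim by (intro ppm_err_shifted_threshold \<sigma>) auto
    ultimately show ?case by simp
  qed
  then have "limsup (\<lambda>M. ereal (ppm_err \<sigma> M (ppm_xi R M) (ppm_xi R M - \<sigma> * q))) \<le> limsup (\<lambda>M. ereal (?bound M))"
    by (rule Limsup_mono)
  also have "(\<lambda>M. ereal (?bound M)) \<longlonglongrightarrow> ereal (0 + Qfun q)"
    by (intro tendsto_ereal tendsto_add false_alarms_vanish[OF \<sigma> R(1) \<theta>(1,3)] tendsto_const)
  then have "limsup (\<lambda>M. ereal (?bound M)) = ereal (Qfun q)"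
    by (simp add: lim_imp_Limsup)
  finally show ?thesis .
qed

text \<open>Scaling the threshold with the amplitude, \<Upsilon> = \<theta>\<xi>, makes both union terms vanish;
  the energy \<xi>^2 = ln M / R tends to infinity and achieves rate R exactly.\<close>
lemma ppm_rate_achievable:
  assumes \<sigma>: "\<sigma> > 0" and R: "0 < R" "R < 1 / (2 * \<sigma>^2)"
  shows "ppm_achievable \<sigma> R"
  unfolding ppm_achievable_def
proof (intro allI impI)
  fix \<epsilon>' :: real assume "\<epsilon>' > 0"
  obtain \<theta> where \<theta>: "0 < \<theta>" "\<theta> < 1" "R < \<theta>^2 / (2 * \<sigma>^2)"
    using rate_margin[OF \<sigma> R] .
  have rate: "ppm_xi R M > 0 \<and> ln (real M) / (ppm_xi R M)^2 > R - \<epsilon>'" if "M \<ge> 2" for M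
    using ppm_xi_pos_sq[OF R(1) that] that R(1) \<open>\<epsilon>' > 0\<close> by simp
  have energy: "filterlim (\<lambda>M. (ppm_xi R M)^2) at_top sequentially"
    using ppm_xi_at_top[OF R(1)] by (intro filterlim_pow_at_top) auto
  let ?bound = "\<lambda>M. (real M - 1) * Qfun (\<theta> * ppm_xi R M / \<sigma>) + Qfun ((1 - \<theta>) * ppm_xi R M / \<sigma>)"
  have "eventually (\<lambda>M. norm (ppm_err \<sigma> M (ppm_xi R M) (\<theta> * ppm_xi R M)) \<le> ?bound M) sequentially"
    using eventually_ge_at_top[of 2]
  proof eventually_elim
    case (elim M)
    have "ppm_xi R M - \<theta> * ppm_xi R M = (1 - \<theta>) * ppm_xi R M" by (simp add: algebra_simps)
    then show ?case
      using ppm_err_union_bound[OF \<sigma>, of M "ppm_xi R M" "\<theta> * ppm_xi R M"] elim ppm_err_nonneg by simp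
  qed
  moreover have "?bound \<longlonglongrightarrow> 0"
    using tendsto_add[OF false_alarms_vanish[OF \<sigma> R(1) \<theta>(1,3)]
        missed_detection_vanishes[OF \<sigma> R(1), of "1 - \<theta>"]] \<theta>(2) by simp
  ultimately have error_vanishes: "(\<lambda>M. ppm_err \<sigma> M (ppm_xi R M) (\<theta> * ppm_xi R M)) \<longlonglongrightarrow> 0"
    by (rule Lim_null_comparison)
  show "\<exists>\<xi>s \<Upsilon>s. (\<forall>M\<ge>2. \<xi>s M > 0 \<and> ln (real M) / (\<xi>s M)^2 > R - \<epsilon>')
        \<and> filterlim (\<lambda>M. (\<xi>s M)^2) at_top sequentially
        \<and> (\<lambda>M. ppm_err \<sigma> M (\<xi>s M) (\<Upsilon>s M)) \<longlonglongrightarrow> 0"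
    by (rule exI[of _ "ppm_xi R"], rule exI[of _ "\<lambda>M. \<theta> * ppm_xi R M"])
       (use rate energy error_vanishes in blast)
qed

theorem mainTheorem2:
  fixes \<sigma> Rd \<epsilon> :: real
  assumes "\<sigma> > 0" and "0 < Rd" and "Rd < 1 / (2 * \<sigma>^2)" and "0 < \<epsilon>" and "\<epsilon> < 1"
  shows "(\<forall>M::nat. M \<ge> 2 \<longrightarrow>
            ppm_err \<sigma> M (ppm_xi Rd M) (ppm_xi Rd M - \<sigma> * Qinv \<epsilon>)
              \<le> (real M - 1) * Qfun ((ppm_xi Rd M - \<sigma> * Qinv \<epsilon>) / \<sigma>) + \<epsilon>)
       \<and> limsup (\<lambda>M. ereal (ppm_err \<sigma> M (ppm_xi Rd M) (ppm_xi Rd M - \<sigma> * Qinv \<epsilon>))) \<le> ereal \<epsilon>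
       \<and> (\<forall>R. 0 < R \<and> R < 1 / (2 * \<sigma>^2) \<longrightarrow> ppm_achievable \<sigma> R)"
proof -
  have Q_Qinv: "Qfun (Qinv \<epsilon>) = \<epsilon>"
    using assms(4,5) by (rule Qfun_Qinv)
  show ?thesis
    using ppm_err_shifted_threshold[OF assms(1), of _ _ "Qinv \<epsilon>"]
      ppm_err_limsup[OF assms(1-3), of "Qinv \<epsilon>"] ppm_rate_achievable[OF assms(1)]
    by (simp add: Q_Qinv)
qed

end
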